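(* Let $G$ be a graph, $\mathscr{C}$ a skew graph category and $F=\{(K,g_{\mathbf{a}}^{-1}g_{\mathbf{b}})\mid(K,\mathbf{a},\mathbf{b})\in\mathscr{C}\}$ the corresponding graph fibration. Let $K$ be the greatest subgraph of $G$ contained in $F$, i.e. a subgraph $K\subset G$ with $F(K)\ne\emptyset$ such that every subgraph $H\subset G$ with $F(H)\neq\emptyset$ satisfies $H\subset K$. Then for all $k,l\in\mathbb{N}_0$ the vector space $\mathscr{C}^G(k,l)$ has the linear basis $\{\hat T^G_{(K,\mathbf{a},\mathbf{b})}\mid[\mathbf{a},\mathbf{b}]\in W^{\mathscr{C}}_K(k,l)\}$.
   Context: Graphs are finite, undirected, without multiple edges, loops allowed, up to isomorphism; $N_k$ is the edgeless graph on $k$ vertices; graph homomorphisms map edges (including loops) to edges; $H\subset G$ means $H$ is (isomorphic to) a subgraph of $G$. $\mathbb{Z}_2^{*V}$ is the group generated by the set $V$ subject to $v^2=e$; $g_{\mathbf{a}}$ is the product of the entries of a tuple $\mathbf{a}$. A vertex overlap of graphs $K,H$ is a subset $f\subset V(K)\times V(H)$ in which each vertex occurs at most once; $K\cup_fH$ is the quotient of $K\sqcup H$ identifying $v$ with $w$ for $(v,w)\in f$, with induced maps $f_K,f_H$. Bilabelled graph: $(K,\mathbf{a},\mathbf{b})$, $\mathbf{a}\in V(K)^k$, $\mathbf{b}\in V(K)^l$, up to isomorphism preserving tuples; $\mathscr{C}(k,l)$ those in $\mathscr{C}$ with $k$ inputs, $l$ outputs. Operations: $f$-union $(K,\mathbf{a},\mathbf{b})\cup_f(H,\mathbf{c},\mathbf{d})=(K\cup_fH,f_K(\mathbf{a})f_H(\mathbf{c}),f_K(\mathbf{b})f_H(\mathbf{d}))$;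 composition (for $|\mathbf{b}|=|\mathbf{c}|$) $(H,\mathbf{c},\mathbf{d})\cdot(K,\mathbf{a},\mathbf{b})=(H\cdot K,\mathbf{a},\mathbf{d})$ with $H\cdot K$ the quotient of $K\sqcup H$ identifying $b_i$ with $c_i$; involution swaps the tuples. $\ker\mathbf{b}$ is the partition of positions by equal entries. A skew graph category is a set of bilabelled graphs containing $(N_0,\emptyset,\emptyset)$, $(M,(v),(v))$, $(M,\emptyset,(v,v))$ ($M$ the one-vertex loopless graph), closed under all $f$-unions, under compositions $\mathbf{H}\cdot\mathbf{K}$ with $\mathbf{K}=(K,\mathbf{a},\mathbf{b}),\mathbf{H}=(H,\mathbf{c},\mathbf{d})$, $\ker\mathbf{b}=\ker\mathbf{c}$, and under involution. For a set $F$ of pairs $(K,a)$ (up to isomorphism), $F(K):=\{a\mid(K,a)\in F\}$. With the vertices of $G$ labelled $1,\dots,n$, $\hat T^G_{(K,\mathbf{a},\mathbf{b})}\colon(\mathbb{C}^n)^{\otimes k}\to(\mathbb{C}^n)^{\otimes l}$ has entries $\#\{\phi\colon K\to G\text{ injective homomorphism}\mid\phi(\mathbf{a})=\mathbf{i},\phi(\mathbf{b})=\mathbf{j}\}$ at position $(\mathbf{j},\mathbf{i})$, and $\mathscr{C}^G(k,l):=\mathrm{span}\{\hat T^G_{\mathbf{H}}\mid\mathbf{H}\in\mathscr{C}(k,l)\}$. $W_K(k,l):=(V(K)^k\times V(K)^l)/\mathrm{Aut}\,K$, with classes $[\mathbf{a},\mathbf{b}]$; $W^{\mathscr{C}}_K(k,l):=\{[\mathbf{a},\mathbf{b}]\in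 W_K(k,l)\mid(K,\mathbf{a},\mathbf{b})\in\mathscr{C}(k,l)\}$ ($\hat T^G_{(K,\mathbf{a},\mathbf{b})}$ depends only on the class). *)

theory Defs
  imports Complex_Main "HOL-Library.FuncSet" "HOL-Library.Function_Algebras"
begin

text \<open>A graph is a pair (V, E): a vertex set of natural numbers and a set of edges,
  each edge being a set of one (a loop) or two vertices. Graphs are considered up to
  isomorphism; concretely we work with representatives on natural-number vertices.\<close>

type_synonym graph = "nat set \<times> nat set set"

definition verts :: "graph \<Rightarrow> nat set" where "verts G = fst G"
definition edges :: "graph \<Rightarrow> nat set set" where "edges G = snd G"

definition wf_graph :: "graph \<Rightarrow> bool" where
  "wf_graph G \<longleftrightarrow> finite (verts G) \<and>
     (\<forall>e\<in>edges G. e \<subseteq> verts G \<and> (card e = 1 \<or> card e = 2))"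

definition is_hom :: "graph \<Rightarrow> graph \<Rightarrow> (nat \<Rightarrow> nat) \<Rightarrow> bool" where
  "is_hom K G \<phi> \<longleftrightarrow> \<phi> ` verts K \<subseteq> verts G \<and> (\<forall>e\<in>edges K. \<phi> ` e \<in> edges G)"

text \<open>H \<subset> G: H is isomorphic to a subgraph of G (i.e. H embeds injectively into G)\<close>
definition subgraph_of :: "graph \<Rightarrow> graph \<Rightarrow> bool" where
  "subgraph_of H G \<longleftrightarrow> (\<exists>\<phi>. inj_on \<phi> (verts H) \<and> is_hom H G \<phi>)"

definition is_iso :: "graph \<Rightarrow> graph \<Rightarrow> (nat \<Rightarrow> nat) \<Rightarrow> bool" where
  "is_iso K K' \<phi> \<longleftrightarrow> bij_betw \<phi> (verts K) (verts K') \<and>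
     (\<forall>e. e \<subseteq> verts K \<longrightarrow> (e \<in> edges K \<longleftrightarrow> \<phi> ` e \<in> edges K'))"

type_synonym blg = "graph \<times> nat list \<times> nat list"

definition wf_blg :: "blg \<Rightarrow> bool" where
  "wf_blg X = (case X of (K, a, b) \<Rightarrow> wf_graph K \<and> set a \<subseteq> verts K \<and> set b \<subseteq> verts K)"

definition vertex_overlap :: "graph \<Rightarrow> graph \<Rightarrow> (nat \<times> nat) set \<Rightarrow> bool" where
  "vertex_overlap K H f \<longleftrightarrow> f \<subseteq> verts K \<times> verts H \<and>
     (\<forall>(v,w)\<in>f. \<forall>(v',w')\<in>f. (v = v' \<longleftrightarrow> w = w'))"

text \<open>L together with the maps p = f_K and q = f_H is (a representative of) the quotient
  K \<union>_f H of the disjoint union K \<sqcup> H identifying v with w for (v,w) \<in> f.\<close>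
definition is_glue :: "graph \<Rightarrow> graph \<Rightarrow> (nat \<times> nat) set \<Rightarrow> graph \<Rightarrow>
    (nat \<Rightarrow> nat) \<Rightarrow> (nat \<Rightarrow> nat) \<Rightarrow> bool" where
  "is_glue K H f L p q \<longleftrightarrow> wf_graph L \<and>
     inj_on p (verts K) \<and> inj_on q (verts H) \<and>
     p ` verts K \<union> q ` verts H = verts L \<and>
     (\<forall>v\<in>verts K. \<forall>w\<in>verts H. p v = q w \<longleftrightarrow> (v, w) \<in> f) \<and>
     edges L = (image p) ` edges K \<union> (image q) ` edges H"

definition M_graph :: graph where "M_graph = ({0}, {})"
definition N0_graph :: graph where "N0_graph = ({}, {})"

text \<open>A skew graph category, represented as an isomorphism-closed set of (representatives
  of) bilabelled graphs.\<close>
definition skew_graph_category :: "blg set \<Rightarrow> bool" where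
  "skew_graph_category C \<longleftrightarrow>
     (\<forall>X\<in>C. wf_blg X) \<and>
     \<comment> \<open>elements are isomorphism classes\<close>
     (\<forall>K a b K' \<phi>. (K, a, b) \<in> C \<longrightarrow> wf_graph K' \<longrightarrow> is_iso K K' \<phi> \<longrightarrow>
         (K', map \<phi> a, map \<phi> b) \<in> C) \<and>
     (N0_graph, [], []) \<in> C \<and>
     (M_graph, [0], [0]) \<in> C \<and>
     (M_graph, [], [0, 0]) \<in> C \<and>
     \<comment> \<open>closed under all f-unions\<close>
     (\<forall>K a b H c d f L p q. (K, a, b) \<in> C \<longrightarrow> (H, c, d) \<in> C \<longrightarrow>
         vertex_overlap K H f \<longrightarrow> is_glue K H f L p q \<longrightarrow>
         (L, map p a @ map q c, map p b @ map q d) \<in> C) \<and>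
     \<comment> \<open>closed under compositions (H,c,d)\<cdot>(K,a,b) with ker b = ker c\<close>
     (\<forall>K a b H c d L p q. (K, a, b) \<in> C \<longrightarrow> (H, c, d) \<in> C \<longrightarrow>
         length b = length c \<longrightarrow>
         (\<forall>i<length b. \<forall>j<length b. b ! i = b ! j \<longleftrightarrow> c ! i = c ! j) \<longrightarrow>
         is_glue K H {(b ! i, c ! i) | i. i < length b} L p q \<longrightarrow>
         (L, map p a, map q d) \<in> C) \<and>
     \<comment> \<open>closed under involution\<close>
     (\<forall>K a b. (K, a, b) \<in> C \<longrightarrow> (K, b, a) \<in> C)"

text \<open>Elements of the free product of copies of Z_2 generated by V are represented by
  reduced words (no two equal adjacent letters); red computes the normal form of a word,
  so g_a = red a, and g_a^{-1} = red (rev a).\<close>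
fun red :: "nat list \<Rightarrow> nat list" where
  "red [] = []"
| "red (x # xs) = (case red xs of [] \<Rightarrow> [x] | y # ys \<Rightarrow> (if x = y then ys else x # y # ys))"

definition gprod :: "nat list \<Rightarrow> nat list" where "gprod a = red a"
definition ginv :: "nat list \<Rightarrow> nat list" where "ginv g = red (rev g)"
definition gmult :: "nat list \<Rightarrow> nat list \<Rightarrow> nat list" where "gmult g h = red (g @ h)"

definition fib :: "blg set \<Rightarrow> graph \<Rightarrow> nat list set" where
  "fib C K = {gmult (ginv (gprod a)) (gprod b) | a b. (K, a, b) \<in> C}"

type_synonym tensor = "nat list \<Rightarrow> nat list \<Rightarrow> complex"

text \<open>The entry at position (j, i) (j output tuple, i input tuple, both tuples of vertices
  of G) counts injective homomorphisms K \<rightarrow> G with \<phi>(a) = i, \<phi>(b) = j.\<close>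
definition That :: "graph \<Rightarrow> blg \<Rightarrow> tensor" where
  "That G X = (case X of (K, a, b) \<Rightarrow> (\<lambda>j i. of_nat (card
      {\<phi> \<in> verts K \<rightarrow>\<^sub>E verts G. inj_on \<phi> (verts K) \<and> is_hom K G \<phi> \<and>
          map \<phi> a = i \<and> map \<phi> b = j})))"

definition tscale :: "complex \<Rightarrow> tensor \<Rightarrow> tensor" where
  "tscale c T = (\<lambda>j i. c * T j i)"

definition CG :: "blg set \<Rightarrow> graph \<Rightarrow> nat \<Rightarrow> nat \<Rightarrow> tensor set" where
  "CG C G k l = module.span tscale
     {That G (K, a, b) | K a b. (K, a, b) \<in> C \<and> length a = k \<and> length b = l}"

definition Aut :: "graph \<Rightarrow> (nat \<Rightarrow> nat) set" where
  "Aut K = {\<phi>. is_iso K K \<phi>}"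

definition lclass :: "graph \<Rightarrow> nat list \<Rightarrow> nat list \<Rightarrow> (nat list \<times> nat list) set" where
  "lclass K a b = {(map \<phi> a, map \<phi> b) | \<phi>. \<phi> \<in> Aut K}"

definition W :: "graph \<Rightarrow> nat \<Rightarrow> nat \<Rightarrow> (nat list \<times> nat list) set set" where
  "W K k l = {lclass K a b | a b. length a = k \<and> length b = l \<and>
                 set a \<subseteq> verts K \<and> set b \<subseteq> verts K}"

definition WC :: "blg set \<Rightarrow> graph \<Rightarrow> nat \<Rightarrow> nat \<Rightarrow> (nat list \<times> nat list) set set" where
  "WC C K k l = {w \<in> W K k l. \<exists>a b. w = lclass K a b \<and> (K, a, b) \<in> C}"

text \<open>T-hat of a class [a,b] (well defined: it depends only on the class)\<close>
definition That_cls :: "graph \<Rightarrow> graph \<Rightarrow> (nat list \<times> nat list) set \<Rightarrow> tensor" where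
  "That_cls G K w = (let (a, b) = (SOME p. p \<in> w) in That G (K, a, b))"

end

(*
  Since F contains the edgeless graph on V(G), the greatest subgraph K has as many vertices as G,
  so every embedding theta of K into G is a bijection on vertices. Gluing K and a member H of the
  category along embeddings theta and phi into G yields a subgraph of G that lies in F; it embeds
  into K, and counting edges shows that phi maps the edges of H into theta(E(K)). Hence
  theta^-1 o phi is an embedding of H into K along which labels can be pushed, and any two
  embeddings of K into G differ by an automorphism of K.

  Averaging over all embeddings phi of H then writes T_(H,a,b) as a combination of tensors
  T_(K,c,d) with (K,c,d) in the category, which gives spanning. For independence, fix an
  embedding psi of K: the tensor of the class [c,d] is the only one with a nonzero entry at
  position (psi d, psi c).
*)

theory Submission
  imports Defs
begin

section \<open>Tensors\<close>

interpretation tensors: module tscale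
  by unfold_locales (auto simp: tscale_def fun_eq_iff algebra_simps)

lemma sum_apply2: "(\<Sum>x\<in>A. f x) j i = (\<Sum>x\<in>A. f x j i :: 'c :: comm_monoid_add)"
  by (induction A rule: infinite_finite_induct) auto

lemma independent_if_separating_entries:
  assumes "\<And>T. T \<in> S \<Longrightarrow> \<exists>j i. T j i \<noteq> 0 \<and> (\<forall>T'\<in>S. T' j i \<noteq> 0 \<longrightarrow> T' = T)"
  shows "\<not> tensors.dependent S"
proof
  assume "tensors.dependent S"
  then obtain t u T where t: "finite t" "t \<subseteq> S" "(\<Sum>v\<in>t. tscale (u v) v) = 0"
    and T: "T \<in> t" "u T \<noteq> 0"
    unfolding tensors.dependent_explicit by blast
  obtain j i where T_ji: "T j i \<noteq> 0" and sep: "\<And>T'. T' \<in> S \<Longrightarrow> T' j i \<noteq> 0 \<Longrightarrow> T' = T"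
    using assms T(1) t(2) by blast
  have "0 = (\<Sum>v\<in>t. u v * v j i)"
    using fun_cong[OF fun_cong[OF t(3)], of j i] by (simp add: sum_apply2 tscale_def)
  also have "\<dots> = (\<Sum>v\<in>t. if v = T then u T * T j i else 0)"
    using sep t(2) by (intro sum.cong) auto
  also have "\<dots> = u T * T j i"
    using t(1) T(1) by simp
  finally show False
    using T(2) T_ji by simp
qed

section \<open>Graphs, embeddings and automorphisms\<close>

lemma verts_Pair [simp]: "verts (V, E) = V"
  and edges_Pair [simp]: "edges (V, E) = E"
  by (simp_all add: verts_def edges_def)

lemma wf_graph_finite_verts: "wf_graph K \<Longrightarrow> finite (verts K)"
  unfolding wf_graph_def by blast

lemma wf_graph_edges_Pow: "wf_graph K \<Longrightarrow> edges K \<subseteq> Pow (verts K)"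
  unfolding wf_graph_def by blast

lemma wf_graph_finite_edges: "wf_graph K \<Longrightarrow> finite (edges K)"
  using wf_graph_edges_Pow wf_graph_finite_verts finite_subset by blast

lemma is_hom_comp: "is_hom H K \<phi> \<Longrightarrow> is_hom K G \<theta> \<Longrightarrow> is_hom H G (\<theta> \<circ> \<phi>)"
  unfolding is_hom_def image_comp[symmetric] by blast

lemma card_verts_le_if_subgraph:
  assumes "finite (verts K)" "subgraph_of L K"
  shows "card (verts L) \<le> card (verts K)"
  using assms card_inj_on_le unfolding subgraph_of_def is_hom_def by blast

lemma card_edges_le_if_subgraph:
  assumes "wf_graph L" "wf_graph K" "subgraph_of L K"
  shows "card (edges L) \<le> card (edges K)"
proof -
  obtain \<rho> where \<rho>: "inj_on \<rho> (verts L)" "is_hom L K \<rho>"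
    using assms(3) unfolding subgraph_of_def by blast
  have "inj_on (image \<rho>) (edges L)"
    using inj_on_image_Pow[OF \<rho>(1)] wf_graph_edges_Pow[OF assms(1)] inj_on_subset by blast
  moreover have "image \<rho> ` edges L \<subseteq> edges K"
    using \<rho>(2) unfolding is_hom_def by blast
  ultimately show ?thesis
    using card_inj_on_le wf_graph_finite_edges[OF assms(2)] by blast
qed

lemma is_iso_self_iff:
  assumes "wf_graph K"
  shows "is_iso K K \<sigma> \<longleftrightarrow> inj_on \<sigma> (verts K) \<and> is_hom K K \<sigma>"
proof
  assume iso: "is_iso K K \<sigma>"
  then have "inj_on \<sigma> (verts K)" "\<sigma> ` verts K = verts K"
    unfolding is_iso_def bij_betw_def by blast+
  moreover have "\<sigma> ` e \<in> edges K" if "e \<in> edges K" for e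
    using iso that wf_graph_edges_Pow[OF assms] unfolding is_iso_def by blast
  ultimately show "inj_on \<sigma> (verts K) \<and> is_hom K K \<sigma>"
    unfolding is_hom_def by blast
next
  assume \<sigma>: "inj_on \<sigma> (verts K) \<and> is_hom K K \<sigma>"
  then have "\<sigma> ` verts K = verts K"
    using endo_inj_surj wf_graph_finite_verts[OF assms] unfolding is_hom_def by blast
  then have bij: "bij_betw \<sigma> (verts K) (verts K)"
    using \<sigma> unfolding bij_betw_def by blast
  have inj_Pow: "inj_on (image \<sigma>) (Pow (verts K))"
    using \<sigma> inj_on_image_Pow by blast
  have "image \<sigma> ` edges K \<subseteq> edges K"
    using \<sigma> unfolding is_hom_def by blast
  then have edges_onto: "image \<sigma> ` edges K = edges K"
    by (rule endo_inj_surj[OF wf_graph_finite_edges[OF assms] _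
          inj_on_subset[OF inj_Pow wf_graph_edges_Pow[OF assms]]])
  have "e \<in> edges K" if e: "e \<subseteq> verts K" "\<sigma> ` e \<in> edges K" for e
  proof -
    obtain e0 where "e0 \<in> edges K" "\<sigma> ` e = \<sigma> ` e0"
      using e(2) edges_onto by (metis imageE)
    moreover have "e0 \<in> Pow (verts K)"
      using \<open>e0 \<in> edges K\<close> wf_graph_edges_Pow[OF assms] by blast
    ultimately show ?thesis
      using inj_onD[OF inj_Pow] e(1) by blast
  qed
  then have "e \<in> edges K \<longleftrightarrow> \<sigma> ` e \<in> edges K" if "e \<subseteq> verts K" for e
    using that \<sigma> unfolding is_hom_def by blast
  with bij show "is_iso K K \<sigma>"
    unfolding is_iso_def by blast
qed

lemma is_iso_comp:
  assumes "wf_graph K" "is_iso K K \<sigma>" "is_iso K K \<tau>"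
  shows "is_iso K K (\<tau> \<circ> \<sigma>)"
proof -
  have "\<sigma> ` verts K \<subseteq> verts K"
    using assms(2) unfolding is_iso_def bij_betw_def by blast
  then show ?thesis
    using assms comp_inj_on inj_on_subset is_hom_comp unfolding is_iso_self_iff[OF assms(1)]
    by metis
qed

lemma is_iso_inv_into:
  assumes "is_iso K K \<sigma>"
  shows "is_iso K K (inv_into (verts K) \<sigma>)"
proof -
  have \<sigma>: "bij_betw \<sigma> (verts K) (verts K)"
    using assms unfolding is_iso_def by blast
  have "e \<in> edges K \<longleftrightarrow> inv_into (verts K) \<sigma> ` e \<in> edges K" if "e \<subseteq> verts K" for e
  proof -
    have "inv_into (verts K) \<sigma> ` e \<subseteq> verts K"
      using that bij_betw_inv_into[OF \<sigma>] bij_betw_imp_surj_on by blast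
    moreover have "\<sigma> ` inv_into (verts K) \<sigma> ` e = e"
      using image_inv_into_cancel[OF bij_betw_imp_surj_on[OF \<sigma>] that] .
    ultimately show ?thesis
      using assms unfolding is_iso_def by metis
  qed
  with bij_betw_inv_into[OF \<sigma>] show ?thesis
    unfolding is_iso_def by blast
qed

lemma lclass_refl: "(a, b) \<in> lclass K a b"
proof -
  have "is_iso K K id"
    unfolding is_iso_def by simp
  then show ?thesis
    unfolding lclass_def Aut_def by force
qed

lemma lclass_subset:
  assumes "wf_graph K" "(x, y) \<in> lclass K a b"
  shows "lclass K x y \<subseteq> lclass K a b"
proof
  fix p assume "p \<in> lclass K x y"
  then obtain \<tau> where \<tau>: "is_iso K K \<tau>" "p = (map \<tau> x, map \<tau> y)"
    unfolding lclass_def Aut_def by blast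
  obtain \<sigma> where \<sigma>: "is_iso K K \<sigma>" "x = map \<sigma> a" "y = map \<sigma> b"
    using assms(2) unfolding lclass_def Aut_def by blast
  have "p = (map (\<tau> \<circ> \<sigma>) a, map (\<tau> \<circ> \<sigma>) b)"
    using \<tau>(2) \<sigma>(2,3) by simp
  then show "p \<in> lclass K a b"
    using is_iso_comp[OF assms(1) \<sigma>(1) \<tau>(1)] unfolding lclass_def Aut_def by blast
qed

definition embeddings :: "graph \<Rightarrow> graph \<Rightarrow> (nat \<Rightarrow> nat) set" where
  "embeddings H G = {\<phi> \<in> verts H \<rightarrow>\<^sub>E verts G. inj_on \<phi> (verts H) \<and> is_hom H G \<phi>}"

lemma That_eq_card_embeddings:
  "That G (H, a, b) j i = of_nat (card {\<phi> \<in> embeddings H G. map \<phi> a = i \<and> map \<phi> b = j})"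
  unfolding That_def embeddings_def by simp

lemma embeddingsD:
  assumes "\<phi> \<in> embeddings H G"
  shows "inj_on \<phi> (verts H)" "is_hom H G \<phi>" "\<phi> \<in> extensional (verts H)"
    "\<phi> ` verts H \<subseteq> verts G"
  using assms unfolding embeddings_def by (auto simp: PiE_def)

lemma finite_embeddings: "wf_graph H \<Longrightarrow> finite (verts G) \<Longrightarrow> finite (embeddings H G)"
  unfolding embeddings_def
  by (rule finite_subset[of _ "verts H \<rightarrow>\<^sub>E verts G"]) (auto intro: finite_PiE wf_graph_finite_verts)

lemma restrict_in_embeddings:
  assumes "wf_graph H" "inj_on \<phi> (verts H)" "is_hom H G \<phi>"
  shows "restrict \<phi> (verts H) \<in> embeddings H G"
proof -
  have "restrict \<phi> (verts H) ` e = \<phi> ` e" if "e \<in> edges H" for e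
    using that wf_graph_edges_Pow[OF assms(1)] by auto
  then show ?thesis
    using assms(2,3) unfolding embeddings_def is_hom_def by (auto simp: inj_on_def)
qed

lemma embeddings_ne_iff_subgraph_of:
  "wf_graph H \<Longrightarrow> embeddings H G \<noteq> {} \<longleftrightarrow> subgraph_of H G"
  unfolding subgraph_of_def using embeddingsD(1,2) restrict_in_embeddings by blast

lemma restrict_comp_in_embeddings:
  assumes "wf_graph H" "inj_on \<phi> (verts H)" "is_hom H K \<phi>" "\<theta> \<in> embeddings K G"
  shows "restrict (\<theta> \<circ> \<phi>) (verts H) \<in> embeddings H G"
proof (rule restrict_in_embeddings[OF assms(1)])
  have "\<phi> ` verts H \<subseteq> verts K"
    using assms(3) unfolding is_hom_def by blast
  then show "inj_on (\<theta> \<circ> \<phi>) (verts H)"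
    using comp_inj_on[OF assms(2)] embeddingsD(1)[OF assms(4)] inj_on_subset by blast
  show "is_hom H G (\<theta> \<circ> \<phi>)"
    using is_hom_comp[OF assms(3) embeddingsD(2)[OF assms(4)]] .
qed

lemma map_restrict: "set a \<subseteq> A \<Longrightarrow> map (restrict f A) a = map f a"
  by auto

lemma card_Collect_bij_betw: "bij_betw f A A \<Longrightarrow> card {x \<in> A. P (f x)} = card {x \<in> A. P x}"
  by (intro bij_betw_same_card bij_betw_Collect) auto

lemma precomp_automorphism_bij:
  assumes "wf_graph K" "is_iso K K \<sigma>"
  shows "bij_betw (\<lambda>\<phi>. restrict (\<phi> \<circ> \<sigma>) (verts K)) (embeddings K G) (embeddings K G)"
proof (rule bij_betw_byWitness[where f' = "\<lambda>\<phi>. restrict (\<phi> \<circ> inv_into (verts K) \<sigma>) (verts K)"])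
  have \<sigma>: "bij_betw \<sigma> (verts K) (verts K)"
    using assms(2) unfolding is_iso_def by blast
  have \<sigma>_hom: "inj_on \<sigma> (verts K)" "is_hom K K \<sigma>"
    and \<sigma>'_hom: "inj_on (inv_into (verts K) \<sigma>) (verts K)" "is_hom K K (inv_into (verts K) \<sigma>)"
    using assms is_iso_inv_into is_iso_self_iff by blast+
  show "\<forall>\<phi>\<in>embeddings K G. restrict (restrict (\<phi> \<circ> \<sigma>) (verts K) \<circ> inv_into (verts K) \<sigma>) (verts K) = \<phi>"
    using \<sigma> embeddingsD(3)[of _ K G]
    by (auto intro!: extensionalityI[OF restrict_extensional]
        simp: bij_betw_def inv_into_into f_inv_into_f)
  show "\<forall>\<phi>\<in>embeddings K G. restrict (restrict (\<phi> \<circ> inv_into (verts K) \<sigma>) (verts K) \<circ> \<sigma>) (verts K) = \<phi>"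
    using \<sigma> embeddingsD(3)[of _ K G]
    by (auto intro!: extensionalityI[OF restrict_extensional] simp: bij_betw_def)
  show "(\<lambda>\<phi>. restrict (\<phi> \<circ> \<sigma>) (verts K)) ` embeddings K G \<subseteq> embeddings K G"
    using restrict_comp_in_embeddings[OF assms(1) \<sigma>_hom] by blast
  show "(\<lambda>\<phi>. restrict (\<phi> \<circ> inv_into (verts K) \<sigma>) (verts K)) ` embeddings K G \<subseteq> embeddings K G"
    using restrict_comp_in_embeddings[OF assms(1) \<sigma>'_hom] by blast
qed

lemma That_automorphism_invariant:
  assumes "wf_graph K" "is_iso K K \<sigma>" "set a \<subseteq> verts K" "set b \<subseteq> verts K"
  shows "That G (K, map \<sigma> a, map \<sigma> b) = That G (K, a, b)"
proof (intro ext)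
  fix j i
  let ?F = "\<lambda>\<phi>. restrict (\<phi> \<circ> \<sigma>) (verts K)"
  have "card {\<phi> \<in> embeddings K G. map \<phi> (map \<sigma> a) = i \<and> map \<phi> (map \<sigma> b) = j}
      = card {\<phi> \<in> embeddings K G. map (?F \<phi>) a = i \<and> map (?F \<phi>) b = j}"
    using assms(3,4) by (simp add: map_restrict)
  also have "\<dots> = card {\<phi> \<in> embeddings K G. map \<phi> a = i \<and> map \<phi> b = j}"
    using card_Collect_bij_betw[OF precomp_automorphism_bij[OF assms(1,2)],
        where P = "\<lambda>\<phi>. map \<phi> a = i \<and> map \<phi> b = j"] .
  finally show "That G (K, map \<sigma> a, map \<sigma> b) j i = That G (K, a, b) j i"
    unfolding That_eq_card_embeddings by simp
qed

lemma That_cls_lclass: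
  assumes "wf_graph K" "set a \<subseteq> verts K" "set b \<subseteq> verts K"
  shows "That_cls G K (lclass K a b) = That G (K, a, b)"
proof -
  obtain a' b' where rep: "(SOME p. p \<in> lclass K a b) = (a', b')"
    by fastforce
  have "(a', b') \<in> lclass K a b"
    unfolding rep[symmetric] using lclass_refl by (rule someI)
  then obtain \<sigma> where "is_iso K K \<sigma>" "a' = map \<sigma> a" "b' = map \<sigma> b"
    unfolding lclass_def Aut_def by blast
  then show ?thesis
    using That_automorphism_invariant[OF assms(1) _ assms(2,3)] rep unfolding That_cls_def by simp
qed

section \<open>Skew graph categories\<close>

lemma skew_graph_categoryD:
  assumes "skew_graph_category C"
  shows skew_cat_wf: "(K, a, b) \<in> C \<Longrightarrow> wf_graph K \<and> set a \<subseteq> verts K \<and> set b \<subseteq> verts K"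
    and skew_cat_N0: "(N0_graph, [], []) \<in> C"
    and skew_cat_M_id: "(M_graph, [0], [0]) \<in> C"
    and skew_cat_M_cap: "(M_graph, [], [0, 0]) \<in> C"
    and skew_cat_union: "(K, a, b) \<in> C \<Longrightarrow> (H, c, d) \<in> C \<Longrightarrow> vertex_overlap K H f \<Longrightarrow>
      is_glue K H f L p q \<Longrightarrow> (L, map p a @ map q c, map p b @ map q d) \<in> C"
    and skew_cat_comp: "(K, a, b) \<in> C \<Longrightarrow> (H, c, d) \<in> C \<Longrightarrow> length b = length c \<Longrightarrow>
      (\<And>i j. i < length b \<Longrightarrow> j < length b \<Longrightarrow> b ! i = b ! j \<longleftrightarrow> c ! i = c ! j) \<Longrightarrow>
      is_glue K H {(b ! i, c ! i) | i. i < length b} L p q \<Longrightarrow> (L, map p a, map q d) \<in> C"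
    and skew_cat_swap: "(K, a, b) \<in> C \<Longrightarrow> (K, b, a) \<in> C"
proof -
  show "(K, a, b) \<in> C \<Longrightarrow> wf_graph K \<and> set a \<subseteq> verts K \<and> set b \<subseteq> verts K"
  proof -
    assume "(K, a, b) \<in> C"
    then have "wf_blg (K, a, b)"
      using assms unfolding skew_graph_category_def by (elim conjE) blast
    then show ?thesis
      unfolding wf_blg_def by simp
  qed
qed (use assms[unfolded skew_graph_category_def] in \<open>simp_all del: split_paired_All\<close>)

lemma skew_cat_glue_mem:
  assumes C: "skew_graph_category C" and KC: "(K, a, b) \<in> C" and HC: "(H, c, d) \<in> C"
    and p: "inj_on p (verts K)" and q: "inj_on q (verts H)"
  shows "((p ` verts K \<union> q ` verts H, image p ` edges K \<union> image q ` edges H),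
           map p a @ map q c, map p b @ map q d) \<in> C"
proof -
  define L where "L = (p ` verts K \<union> q ` verts H, image p ` edges K \<union> image q ` edges H)"
  define f where "f = {(v, w). v \<in> verts K \<and> w \<in> verts H \<and> p v = q w}"
  have wf: "wf_graph K" "wf_graph H"
    using skew_cat_wf[OF C KC] skew_cat_wf[OF C HC] by auto
  have image_edge: "r ` e \<subseteq> r ` verts X \<and> (card (r ` e) = 1 \<or> card (r ` e) = 2)"
    if "wf_graph X" "inj_on r (verts X)" "e \<in> edges X" for X r e
  proof -
    have "e \<subseteq> verts X" "card e = 1 \<or> card e = 2"
      using that(1,3) unfolding wf_graph_def by auto
    then show ?thesis
      using card_image inj_on_subset[OF that(2)] by fastforce
  qed
  have "finite (verts L)"
    using wf wf_graph_finite_verts unfolding L_def by simp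
  moreover have "e \<subseteq> verts L \<and> (card e = 1 \<or> card e = 2)" if "e \<in> edges L" for e
  proof -
    from that consider e0 where "e0 \<in> edges K" "e = p ` e0" | e0 where "e0 \<in> edges H" "e = q ` e0"
      unfolding L_def by auto
    then show ?thesis
    proof cases
      case 1
      then show ?thesis
        using image_edge[OF wf(1) p 1(1)] unfolding L_def by auto
    next
      case 2
      then show ?thesis
        using image_edge[OF wf(2) q 2(1)] unfolding L_def by auto
    qed
  qed
  ultimately have "wf_graph L"
    unfolding wf_graph_def by blast
  then have "is_glue K H f L p q"
    using p q unfolding is_glue_def L_def f_def by auto
  moreover have "vertex_overlap K H f"
    using p q unfolding vertex_overlap_def f_def by (auto simp: inj_on_def)
  ultimately show ?thesis
    using skew_cat_union[OF C KC HC] unfolding L_def by blast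
qed

lemma skew_cat_comp_mem:
  assumes C: "skew_graph_category C" and KC: "(K, a, b) \<in> C" and HC: "(H, b, d) \<in> C"
    and "verts K = set b" and "edges K \<subseteq> edges H"
  shows "(H, a, d) \<in> C"
proof -
  have "is_glue K H {(b ! i, b ! i) | i. i < length b} H id id"
    using skew_cat_wf[OF C HC] assms(4,5) unfolding is_glue_def by (auto simp: in_set_conv_nth)
  from skew_cat_comp[OF C KC HC _ _ this] show ?thesis
    by simp
qed

lemma skew_cat_edgeless_mem:
  assumes C: "skew_graph_category C"
  shows "((set w, {}), w, w) \<in> C"
proof (induction w rule: rev_induct)
  case Nil
  then show ?case
    using skew_cat_N0[OF C] by (simp add: N0_graph_def)
next
  case (snoc x w)
  from skew_cat_glue_mem[OF C snoc.IH skew_cat_M_id[OF C], where p = id and q = "\<lambda>_. x"]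
  show ?case
    by (simp add: M_graph_def insert_commute)
qed

lemma skew_cat_edgeless_cap_mem:
  assumes C: "skew_graph_category C"
  shows "((set w \<union> {x}, {}), w, w @ [x, x]) \<in> C"
  using skew_cat_glue_mem[OF C skew_cat_edgeless_mem[OF C] skew_cat_M_cap[OF C],
      where p = id and q = "\<lambda>_. x"]
  by (simp add: M_graph_def)

lemma skew_cat_move_last_input:
  assumes C: "skew_graph_category C" and KC: "(K, a @ [x], b) \<in> C"
  shows "(K, a, b @ [x]) \<in> C"
proof -
  have x: "x \<in> verts K"
    using skew_cat_wf[OF C KC] by simp
  have "(K, a @ [x, x], b @ [x]) \<in> C"
    using skew_cat_glue_mem[OF C KC skew_cat_M_id[OF C], where p = id and q = "\<lambda>_. x"] x
    by (simp add: M_graph_def insert_absorb verts_def edges_def)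
  with skew_cat_edgeless_cap_mem[OF C] show ?thesis
    by (rule skew_cat_comp_mem[OF C]) (use skew_cat_wf[OF C KC] in auto)
qed

lemma skew_cat_move_inputs:
  assumes C: "skew_graph_category C"
  shows "(K, a, b) \<in> C \<Longrightarrow> (K, [], b @ rev a) \<in> C"
proof (induction a arbitrary: b rule: rev_induct)
  case (snoc x a)
  from snoc.IH[OF skew_cat_move_last_input[OF C snoc.prems]] show ?case
    by simp
qed simp

text \<open>Labels can only be removed in pairs, so the inputs are first moved to the outputs; the
  resulting output list runs through every vertex and cancels against its mirror image.\<close>
lemma skew_cat_unlabelled_mem:
  assumes C: "skew_graph_category C" and KC: "(K, a, b) \<in> C"
  shows "(K, [], []) \<in> C"
proof -
  have "finite (verts K)"
    using skew_cat_wf[OF C KC] wf_graph_finite_verts by simp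
  then obtain vs where vs: "set vs = verts K"
    using finite_list by blast
  have "(K, a @ vs, b @ vs) \<in> C"
    using skew_cat_glue_mem[OF C KC skew_cat_edgeless_mem[OF C, of vs], where p = id and q = id] vs
    by (simp add: verts_def edges_def)
  from skew_cat_move_inputs[OF C this] have KC': "(K, [], b @ vs @ rev (a @ vs)) \<in> C"
    by simp
  have "verts K = set (b @ vs @ rev (a @ vs))"
    using skew_cat_wf[OF C KC'] vs by auto
  from skew_cat_comp_mem[OF C KC' skew_cat_swap[OF C KC'] this] show ?thesis
    by simp
qed

lemma skew_cat_push_labels:
  assumes C: "skew_graph_category C" and HC: "(H, a, b) \<in> C" and KC: "(K, [], []) \<in> C"
    and x: "inj_on x (verts H)" "is_hom H K x"
  shows "(K, map x a, map x b) \<in> C"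
proof -
  have "(x ` verts H \<union> id ` verts K, image x ` edges H \<union> image id ` edges K) = (verts K, edges K)"
    using x(2) unfolding is_hom_def by auto
  also have "\<dots> = K"
    by (simp add: verts_def edges_def)
  finally have glued: "(x ` verts H \<union> id ` verts K, image x ` edges H \<union> image id ` edges K) = K" .
  from skew_cat_glue_mem[OF C HC KC x(1), where q = id] show ?thesis
    unfolding glued by simp
qed

lemma WC_eq:
  assumes "skew_graph_category C"
  shows "WC C K k l = {lclass K a b | a b. (K, a, b) \<in> C \<and> length a = k \<and> length b = l}"
proof (intro equalityI subsetI)
  fix w assume "w \<in> WC C K k l"
  then obtain a0 b0 a b where w: "w = lclass K a0 b0" "length a0 = k" "length b0 = l"
    "w = lclass K a b" "(K, a, b) \<in> C"
    unfolding WC_def W_def by blast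
  then have "(a, b) \<in> lclass K a0 b0"
    using lclass_refl by metis
  then have "length a = k" "length b = l"
    using w(2,3) unfolding lclass_def by auto
  then show "w \<in> {lclass K a b | a b. (K, a, b) \<in> C \<and> length a = k \<and> length b = l}"
    using w(4,5) by blast
next
  fix w assume "w \<in> {lclass K a b | a b. (K, a, b) \<in> C \<and> length a = k \<and> length b = l}"
  then show "w \<in> WC C K k l"
    using skew_cat_wf[OF assms] unfolding WC_def W_def by blast
qed

lemma That_cls_image_WC:
  assumes "skew_graph_category C"
  shows "That_cls G K ` WC C K k l
    = {That G (K, a, b) | a b. (K, a, b) \<in> C \<and> length a = k \<and> length b = l}"
proof -
  have "That_cls G K (lclass K a b) = That G (K, a, b)" if "(K, a, b) \<in> C" for a b
    using That_cls_lclass skew_cat_wf[OF assms that] by blast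
  then show ?thesis
    unfolding WC_eq[OF assms] by force
qed

section \<open>The greatest subgraph of G contained in F\<close>

locale greatest_subgraph_in_fibration =
  fixes C :: "blg set" and G K :: graph
  assumes skew: "skew_graph_category C"
    and wf_G: "wf_graph G"
    and wf_K: "wf_graph K"
    and K_subgraph_G: "subgraph_of K G"
    and fib_K: "fib C K \<noteq> {}"
    and greatest: "\<And>H. wf_graph H \<Longrightarrow> subgraph_of H G \<Longrightarrow> fib C H \<noteq> {} \<Longrightarrow> subgraph_of H K"
begin

lemma K_unlabelled_mem: "(K, [], []) \<in> C"
proof -
  obtain a b where "(K, a, b) \<in> C"
    using fib_K unfolding fib_def by blast
  then show ?thesis
    by (rule skew_cat_unlabelled_mem[OF skew])
qed

lemma subgraph_of_K: "(H, a, b) \<in> C \<Longrightarrow> subgraph_of H G \<Longrightarrow> subgraph_of H K"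
  using greatest skew_cat_wf[OF skew] unfolding fib_def by blast

lemma embedding_K_exists: "\<exists>\<psi>. \<psi> \<in> embeddings K G"
  using K_subgraph_G embeddings_ne_iff_subgraph_of[OF wf_K] by (simp add: ex_in_conv)

lemma card_verts_K: "card (verts K) = card (verts G)"
proof (rule antisym)
  show "card (verts K) \<le> card (verts G)"
    using card_verts_le_if_subgraph[OF wf_graph_finite_verts[OF wf_G] K_subgraph_G] .
  obtain vs where vs: "set vs = verts G"
    using wf_graph_finite_verts[OF wf_G] finite_list by blast
  have "((verts G, {}), vs, vs) \<in> C"
    using skew_cat_edgeless_mem[OF skew, of vs] vs by simp
  moreover have "subgraph_of (verts G, {}) G"
    unfolding subgraph_of_def is_hom_def by (rule exI[of _ id]) simp
  ultimately have "subgraph_of (verts G, {}) K"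
    by (rule subgraph_of_K)
  then show "card (verts G) \<le> card (verts K)"
    using card_verts_le_if_subgraph[OF wf_graph_finite_verts[OF wf_K]] by fastforce
qed

lemma embedding_onto: "\<theta> \<in> embeddings K G \<Longrightarrow> \<theta> ` verts K = verts G"
  using card_subset_eq[OF wf_graph_finite_verts[OF wf_G]] card_image card_verts_K embeddingsD(1,4)
  by metis

lemma edges_covered:
  assumes HC: "(H, a, b) \<in> C" and \<theta>: "\<theta> \<in> embeddings K G" and \<phi>: "\<phi> \<in> embeddings H G"
  shows "image \<phi> ` edges H \<subseteq> image \<theta> ` edges K"
proof -
  define L where "L = (\<theta> ` verts K \<union> \<phi> ` verts H, image \<theta> ` edges K \<union> image \<phi> ` edges H)"
  have LC: "(L, map \<theta> [] @ map \<phi> a, map \<theta> [] @ map \<phi> b) \<in> C"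
    unfolding L_def
    using skew_cat_glue_mem[OF skew K_unlabelled_mem HC embeddingsD(1)[OF \<theta>] embeddingsD(1)[OF \<phi>]] .
  have fin: "finite (edges L)"
    using skew_cat_wf[OF skew LC] wf_graph_finite_edges by blast
  have sub: "image \<theta> ` edges K \<subseteq> edges L"
    unfolding L_def by simp
  have "subgraph_of L G"
    unfolding subgraph_of_def
  proof (intro exI conjI)
    show "is_hom L G id"
      using embeddingsD(2,4)[OF \<theta>] embeddingsD(2,4)[OF \<phi>] unfolding is_hom_def L_def by (simp add: ball_Un)
  qed simp
  then have "card (edges L) \<le> card (edges K)"
    using card_edges_le_if_subgraph[OF _ wf_K] skew_cat_wf[OF skew LC] subgraph_of_K[OF LC] by blast
  also have "\<dots> = card (image \<theta> ` edges K)"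
    using wf_graph_edges_Pow[OF wf_K]
    by (intro card_image[symmetric] inj_on_subset[OF inj_on_image_Pow[OF embeddingsD(1)[OF \<theta>]]])
  finally have "card (edges L) \<le> card (image \<theta> ` edges K)" .
  with card_mono[OF fin sub] have "card (image \<theta> ` edges K) = card (edges L)"
    by (rule antisym)
  then have "image \<theta> ` edges K = edges L"
    by (rule card_subset_eq[OF fin sub])
  moreover have "image \<phi> ` edges H \<subseteq> edges L"
    unfolding L_def by simp
  ultimately show ?thesis
    by simp
qed

lemma pullback_embedding:
  assumes HC: "(H, a, b) \<in> C" and \<theta>: "\<theta> \<in> embeddings K G" and \<phi>: "\<phi> \<in> embeddings H G"
  shows "inj_on (inv_into (verts K) \<theta> \<circ> \<phi>) (verts H)"
    and "is_hom H K (inv_into (verts K) \<theta> \<circ> \<phi>)"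
proof -
  have into: "\<phi> ` verts H \<subseteq> \<theta> ` verts K"
    using embeddingsD(4)[OF \<phi>] embedding_onto[OF \<theta>] by simp
  show "inj_on (inv_into (verts K) \<theta> \<circ> \<phi>) (verts H)"
    by (rule comp_inj_on[OF embeddingsD(1)[OF \<phi>] inj_on_inv_into[OF into]])
  show "is_hom H K (inv_into (verts K) \<theta> \<circ> \<phi>)"
    unfolding is_hom_def
  proof (intro conjI ballI)
    show "(inv_into (verts K) \<theta> \<circ> \<phi>) ` verts H \<subseteq> verts K"
      using into by (auto simp: image_subset_iff intro: inv_into_into)
    fix e assume "e \<in> edges H"
    then obtain e0 where e0: "e0 \<in> edges K" "\<phi> ` e = \<theta> ` e0"
      using edges_covered[OF HC \<theta> \<phi>] by blast
    have "e0 \<subseteq> verts K"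
      using e0(1) wf_graph_edges_Pow[OF wf_K] by blast
    have "(inv_into (verts K) \<theta> \<circ> \<phi>) ` e = inv_into (verts K) \<theta> ` \<theta> ` e0"
      by (simp only: image_comp[symmetric] e0(2))
    also have "\<dots> = e0"
      using inv_into_image_cancel[OF embeddingsD(1)[OF \<theta>] \<open>e0 \<subseteq> verts K\<close>] .
    finally have "(inv_into (verts K) \<theta> \<circ> \<phi>) ` e = e0" .
    then show "(inv_into (verts K) \<theta> \<circ> \<phi>) ` e \<in> edges K"
      using e0(1) by simp
  qed
qed

lemma automorphism_from_embeddings:
  assumes "\<psi> \<in> embeddings K G" "\<theta> \<in> embeddings K G"
  shows "is_iso K K (inv_into (verts K) \<psi> \<circ> \<theta>)"
  using pullback_embedding[OF K_unlabelled_mem assms] is_iso_self_iff[OF wf_K] by blast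

lemma transport_embeddings_bij:
  assumes HC: "(H, a, b) \<in> C" and \<psi>: "\<psi> \<in> embeddings K G" and \<theta>: "\<theta> \<in> embeddings K G"
  shows "bij_betw (\<lambda>\<phi>. restrict (\<theta> \<circ> (inv_into (verts K) \<psi> \<circ> \<phi>)) (verts H))
    (embeddings H G) (embeddings H G)"
proof -
  have wf_H: "wf_graph H"
    using skew_cat_wf[OF skew HC] by blast
  have into: "restrict (\<theta>' \<circ> (inv_into (verts K) \<psi>' \<circ> \<phi>)) (verts H) \<in> embeddings H G"
    if "\<psi>' \<in> embeddings K G" "\<theta>' \<in> embeddings K G" "\<phi> \<in> embeddings H G" for \<psi>' \<theta>' \<phi>
    using restrict_comp_in_embeddings[OF wf_H pullback_embedding[OF HC that(1,3)] that(2)] .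
  have cancel: "restrict (\<psi>' \<circ> (inv_into (verts K) \<theta>'
      \<circ> restrict (\<theta>' \<circ> (inv_into (verts K) \<psi>' \<circ> \<phi>)) (verts H))) (verts H) = \<phi>"
    if "\<psi>' \<in> embeddings K G" "\<theta>' \<in> embeddings K G" "\<phi> \<in> embeddings H G" for \<psi>' \<theta>' \<phi>
  proof (rule extensionalityI[OF restrict_extensional embeddingsD(3)[OF that(3)]])
    fix v assume v: "v \<in> verts H"
    then have "\<phi> v \<in> \<psi>' ` verts K"
      using embeddingsD(4)[OF that(3)] embedding_onto[OF that(1)] by blast
    then show "restrict (\<psi>' \<circ> (inv_into (verts K) \<theta>'
        \<circ> restrict (\<theta>' \<circ> (inv_into (verts K) \<psi>' \<circ> \<phi>)) (verts H))) (verts H) v = \<phi> v"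
      using v inv_into_into[of "\<phi> v" \<psi>' "verts K"] inv_into_f_f[OF embeddingsD(1)[OF that(2)]]
      by (simp add: f_inv_into_f)
  qed
  show ?thesis
    by (rule bij_betw_byWitness[where f' = "\<lambda>\<phi>. restrict (\<psi> \<circ> (inv_into (verts K) \<theta> \<circ> \<phi>)) (verts H)"])
      (use into[OF \<psi> \<theta>] into[OF \<theta> \<psi>] cancel[OF \<psi> \<theta>] cancel[OF \<theta> \<psi>] in auto)
qed

text \<open>For every embedding \<theta> of K, \<open>\<phi> \<mapsto> \<theta> \<circ> \<psi>\<inverse> \<circ> \<phi>\<close> permutes the embeddings of H, so each of
  the N embeddings \<theta> contributes the full count of T-hat of H.\<close>
lemma That_eq_average:
  assumes HC: "(H, a, b) \<in> C" and \<psi>: "\<psi> \<in> embeddings K G"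
  shows "That G (H, a, b) = (\<Sum>\<phi>\<in>embeddings H G. tscale (1 / of_nat (card (embeddings K G)))
    (That G (K, map (inv_into (verts K) \<psi> \<circ> \<phi>) a, map (inv_into (verts K) \<psi> \<circ> \<phi>) b)))"
proof (intro ext)
  fix j i
  let ?N = "card (embeddings K G)"
  let ?x = "\<lambda>\<phi>. inv_into (verts K) \<psi> \<circ> \<phi>"
  let ?count = "card {\<phi> \<in> embeddings H G. map \<phi> a = i \<and> map \<phi> b = j}"
  have ab: "set a \<subseteq> verts H" "set b \<subseteq> verts H"
    using skew_cat_wf[OF skew HC] by auto
  have fin: "finite (embeddings H G)" "finite (embeddings K G)"
    using finite_embeddings skew_cat_wf[OF skew HC] wf_K wf_graph_finite_verts[OF wf_G] by auto
  have "card {\<phi> \<in> embeddings H G. map \<theta> (map (?x \<phi>) a) = i \<and> map \<theta> (map (?x \<phi>) b) = j} = ?count"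
    if \<theta>: "\<theta> \<in> embeddings K G" for \<theta>
  proof -
    let ?F = "\<lambda>\<phi>. restrict (\<theta> \<circ> ?x \<phi>) (verts H)"
    have "card {\<phi> \<in> embeddings H G. map \<theta> (map (?x \<phi>) a) = i \<and> map \<theta> (map (?x \<phi>) b) = j}
        = card {\<phi> \<in> embeddings H G. map (?F \<phi>) a = i \<and> map (?F \<phi>) b = j}"
      using ab by (simp add: map_restrict)
    also have "\<dots> = ?count"
      using card_Collect_bij_betw[OF transport_embeddings_bij[OF HC \<psi> \<theta>],
          where P = "\<lambda>\<phi>. map \<phi> a = i \<and> map \<phi> b = j"] .
    finally show ?thesis .
  qed
  then have sum_count: "(\<Sum>\<phi>\<in>embeddings H G.
      card {\<theta> \<in> embeddings K G. map \<theta> (map (?x \<phi>) a) = i \<and> map \<theta> (map (?x \<phi>) b) = j})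
      = ?count * ?N"
    by (intro sum_multicount[OF fin]) blast
  have "?N > 0"
    using \<psi> fin(2) card_gt_0_iff by blast
  have "(\<Sum>\<phi>\<in>embeddings H G. tscale (1 / of_nat ?N) (That G (K, map (?x \<phi>) a, map (?x \<phi>) b))) j i
      = 1 / of_nat ?N * of_nat (\<Sum>\<phi>\<in>embeddings H G.
          card {\<theta> \<in> embeddings K G. map \<theta> (map (?x \<phi>) a) = i \<and> map \<theta> (map (?x \<phi>) b) = j})"
    by (simp only: sum_apply2 tscale_def That_eq_card_embeddings sum_distrib_left of_nat_sum)
  also have "\<dots> = of_nat ?count"
    unfolding sum_count using \<open>?N > 0\<close> by simp
  finally show "That G (H, a, b) j i = (\<Sum>\<phi>\<in>embeddings H G. tscale (1 / of_nat ?N)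
      (That G (K, map (?x \<phi>) a, map (?x \<phi>) b))) j i"
    by (simp add: That_eq_card_embeddings)
qed

lemma That_in_span_That_cls:
  assumes HC: "(H, a, b) \<in> C"
  shows "That G (H, a, b) \<in> tensors.span (That_cls G K ` WC C K (length a) (length b))"
proof -
  obtain \<psi> where \<psi>: "\<psi> \<in> embeddings K G"
    using embedding_K_exists by blast
  have "That G (K, map (inv_into (verts K) \<psi> \<circ> \<phi>) a, map (inv_into (verts K) \<psi> \<circ> \<phi>) b)
      \<in> That_cls G K ` WC C K (length a) (length b)" if "\<phi> \<in> embeddings H G" for \<phi>
    using skew_cat_push_labels[OF skew HC K_unlabelled_mem pullback_embedding[OF HC \<psi> that]]
    unfolding That_cls_image_WC[OF skew] by fastforce
  then show ?thesis
    by (subst That_eq_average[OF HC \<psi>]) (intro tensors.span_sum tensors.span_scale tensors.span_base)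
qed

lemma span_That_cls_WC: "tensors.span (That_cls G K ` WC C K k l) = CG C G k l"
proof -
  let ?S = "That_cls G K ` WC C K k l"
  let ?X = "{That G (H, a, b) | H a b. (H, a, b) \<in> C \<and> length a = k \<and> length b = l}"
  have "?S \<subseteq> ?X"
    unfolding That_cls_image_WC[OF skew] by blast
  then have "?S \<subseteq> tensors.span ?X"
    using tensors.span_superset by blast
  moreover have "?X \<subseteq> tensors.span ?S"
  proof
    fix T assume "T \<in> ?X"
    then obtain H a b where "T = That G (H, a, b)" "(H, a, b) \<in> C" "length a = k" "length b = l"
      by blast
    then show "T \<in> tensors.span ?S"
      using That_in_span_That_cls[of H a b] by simp
  qed
  ultimately show ?thesis
    unfolding CG_def by (simp only: tensors.span_eq)
qed

lemma lclass_mem_if_embeddings_agree: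
  assumes \<psi>: "\<psi> \<in> embeddings K G" and \<theta>: "\<theta> \<in> embeddings K G"
    and "set a \<subseteq> verts K" "set b \<subseteq> verts K" "map \<theta> a' = map \<psi> a" "map \<theta> b' = map \<psi> b"
  shows "(a, b) \<in> lclass K a' b'"
proof -
  let ?\<sigma> = "inv_into (verts K) \<psi> \<circ> \<theta>"
  have "map (inv_into (verts K) \<psi>) (map \<psi> c) = c" if "set c \<subseteq> verts K" for c
    using that inv_into_f_f[OF embeddingsD(1)[OF \<psi>]] by (induction c) auto
  then have "(a, b) = (map ?\<sigma> a', map ?\<sigma> b')"
    using assms(3-6) by (metis map_map)
  then show ?thesis
    using automorphism_from_embeddings[OF \<psi> \<theta>] unfolding lclass_def Aut_def by blast
qed

lemma That_entry_ne_0_iff: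
  assumes \<psi>: "\<psi> \<in> embeddings K G"
    and ab: "set a \<subseteq> verts K" "set b \<subseteq> verts K" and ab': "set a' \<subseteq> verts K" "set b' \<subseteq> verts K"
  shows "That G (K, a', b') (map \<psi> b) (map \<psi> a) \<noteq> 0 \<longleftrightarrow> lclass K a' b' = lclass K a b"
proof
  assume "That G (K, a', b') (map \<psi> b) (map \<psi> a) \<noteq> 0"
  then have "{\<theta> \<in> embeddings K G. map \<theta> a' = map \<psi> a \<and> map \<theta> b' = map \<psi> b} \<noteq> {}"
    unfolding That_eq_card_embeddings by (metis card.empty of_nat_0)
  then obtain \<theta> where \<theta>: "\<theta> \<in> embeddings K G" "map \<theta> a' = map \<psi> a" "map \<theta> b' = map \<psi> b"
    by blast
  have "(a, b) \<in> lclass K a' b'"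
    using lclass_mem_if_embeddings_agree[OF \<psi> \<theta>(1) ab \<theta>(2,3)] .
  moreover have "(a', b') \<in> lclass K a b"
    using lclass_mem_if_embeddings_agree[OF \<theta>(1) \<psi> ab'] \<theta>(2,3) by simp
  ultimately show "lclass K a' b' = lclass K a b"
    using lclass_subset[OF wf_K] by blast
next
  assume "lclass K a' b' = lclass K a b"
  then obtain \<sigma> where "is_iso K K \<sigma>" "a' = map \<sigma> a" "b' = map \<sigma> b"
    using lclass_refl[of a' b' K] unfolding lclass_def Aut_def by blast
  then have same: "That G (K, a', b') = That G (K, a, b)"
    using That_automorphism_invariant[OF wf_K _ ab] by blast
  have "finite {\<theta> \<in> embeddings K G. map \<theta> a = map \<psi> a \<and> map \<theta> b = map \<psi> b}"
    using finite_embeddings[OF wf_K wf_graph_finite_verts[OF wf_G]] by simp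
  then have "card {\<theta> \<in> embeddings K G. map \<theta> a = map \<psi> a \<and> map \<theta> b = map \<psi> b} \<noteq> 0"
    using \<psi> by (auto simp: card_eq_0_iff)
  then show "That G (K, a', b') (map \<psi> b) (map \<psi> a) \<noteq> 0"
    unfolding same That_eq_card_embeddings by simp
qed

lemma That_cls_separated:
  assumes "w \<in> WC C K k l"
  obtains j i where "That_cls G K w j i \<noteq> 0"
    and "\<And>w'. w' \<in> WC C K k l \<Longrightarrow> That_cls G K w' j i \<noteq> 0 \<Longrightarrow> w' = w"
proof -
  obtain \<psi> where \<psi>: "\<psi> \<in> embeddings K G"
    using embedding_K_exists by blast
  have rep: "\<exists>a b. v = lclass K a b \<and> set a \<subseteq> verts K \<and> set b \<subseteq> verts K
      \<and> That_cls G K v = That G (K, a, b)" if "v \<in> WC C K k l" for v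
    using that skew_cat_wf[OF skew] That_cls_lclass[OF wf_K] unfolding WC_eq[OF skew] by blast
  obtain a b where w: "w = lclass K a b" "set a \<subseteq> verts K" "set b \<subseteq> verts K"
    "That_cls G K w = That G (K, a, b)"
    using rep[OF assms] by blast
  show thesis
  proof (rule that[of "map \<psi> b" "map \<psi> a"])
    show "That_cls G K w (map \<psi> b) (map \<psi> a) \<noteq> 0"
      using That_entry_ne_0_iff[OF \<psi> w(2,3) w(2,3)] w(4) by simp
    fix w' assume "w' \<in> WC C K k l" "That_cls G K w' (map \<psi> b) (map \<psi> a) \<noteq> 0"
    then show "w' = w"
      using rep That_entry_ne_0_iff[OF \<psi> w(2,3)] w(1) by metis
  qed
qed

lemma inj_on_That_cls: "inj_on (That_cls G K) (WC C K k l)"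
proof (rule inj_onI)
  fix w w' assume w: "w \<in> WC C K k l" and w': "w' \<in> WC C K k l"
    and eq: "That_cls G K w = That_cls G K w'"
  obtain j i where "That_cls G K w j i \<noteq> 0"
    and "\<And>v. v \<in> WC C K k l \<Longrightarrow> That_cls G K v j i \<noteq> 0 \<Longrightarrow> v = w"
    using That_cls_separated[OF w] by blast
  then show "w = w'"
    using w' eq by metis
qed

lemma That_cls_independent: "\<not> tensors.dependent (That_cls G K ` WC C K k l)"
proof (rule independent_if_separating_entries)
  fix T assume "T \<in> That_cls G K ` WC C K k l"
  then obtain w where w: "w \<in> WC C K k l" "T = That_cls G K w"
    by blast
  obtain j i where "That_cls G K w j i \<noteq> 0"
    and "\<And>v. v \<in> WC C K k l \<Longrightarrow> That_cls G K v j i \<noteq> 0 \<Longrightarrow> v = w"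
    using That_cls_separated[OF w(1)] by blast
  then show "\<exists>j i. T j i \<noteq> 0 \<and> (\<forall>T'\<in>That_cls G K ` WC C K k l. T' j i \<noteq> 0 \<longrightarrow> T' = T)"
    using w(2) by blast
qed

end

theorem proposition4p16:
  fixes C :: "blg set" and G K :: graph
  assumes "skew_graph_category C"
    and "wf_graph G"
    and "wf_graph K"
    and "subgraph_of K G"
    and "fib C K \<noteq> {}"
    and "\<And>H. wf_graph H \<Longrightarrow> subgraph_of H G \<Longrightarrow> fib C H \<noteq> {} \<Longrightarrow> subgraph_of H K"
  shows "\<forall>k l. inj_on (That_cls G K) (WC C K k l) \<and>
            \<not> module.dependent tscale (That_cls G K ` WC C K k l) \<and>
            module.span tscale (That_cls G K ` WC C K k l) = CG C G k l"
proof -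
  interpret greatest_subgraph_in_fibration C G K
    using assms by unfold_locales
  show ?thesis
    using inj_on_That_cls That_cls_independent span_That_cls_WC by blast
qed

end
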